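(* Let $(X,T),(Y,S)$ be transitive $1$-step shifts of finite type over a finite alphabet $\mathcal{A}$, let $F:\mathcal{A}^2\to\mathbb{R}$ and $f(x,y)=F(x(0),y(0))$, and let $C\ge0$. If $\nu_0\in\mathcal{M}_S(Y)$ is supported on $Y_{f,C}$, then $\nu_0$ is $\alpha$-maximizing, i.e. $\psi_f(\nu_0)=\alpha(f)$.
   Context: $\mathcal{A}^{\mathbb{Z}}$ carries the product of discrete topologies and left shift $(Tx)(j)=x(j+1)$. A shift is a nonempty compact $X\subseteq\mathcal{A}^{\mathbb{Z}}$ with $TX=X$; a $1$-step shift of finite type is one of the form $X=\{x:(T^jx)|_{[0,1]}\notin\mathcal{F}\ \forall j\}$ for some $\mathcal{F}\subseteq\mathcal{A}^{\{0,1\}}$. Transitive: there is $D\in\mathbb{N}$ such that for all $x_1,x_2\in X$, integers $b_1,a_2$ with $a_2-b_1\ge D$, some $x'\in X$ has $x'(j)=x_1(j)$ for $j\le b_1$ and $x'(j)=x_2(j)$ for $j\ge a_2$. $\psi_f(\nu)=\min\{\int f\,d\lambda:\lambda\in\mathcal{M}_{T\times S}(X\times Y),(\pi_Y)_*\lambda=\nu\}$ with $\pi_Y(x,y)=y$, and $\alpha(f)=\sup_{\nu\in\mathcal{M}_S(Y)}\psi_f(\nu)$. $\mathbb{S}_{[a,b]}f(x,y)=\sum_{j=a}^bf(T^jx,S^jy)$; $P_{a,b}=\{(v_1,v_2)\in\mathcal{A}^2:\exists x\in X,x(a)=v_1,x(b)=v_2\}$; $H_{a,b,v_1,v_2}(y)=\min\{\mathbb{S}_{[a,b]}f(x,y):x\in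 X,x(a)=v_1,x(b)=v_2\}$. $Y_{f,C}$ is the set of $y\in Y$ such that for all integers $a\le b$ there is $(v_1,v_2)\in P_{a,b}$ with $H_{a,b,v_1,v_2}(y)\ge\max\{H_{a,b,v_1,v_2}(y'):y'\in Y,y'|_{\mathbb{Z}\setminus[a,b]}=y|_{\mathbb{Z}\setminus[a,b]}\}-C$. "Supported on $Y_{f,C}$" means $\nu_0(Y_{f,C})=1$. *)

theory Defs
  imports "HOL-Probability.Probability"
begin

definition shift :: "(int \<Rightarrow> 'a) \<Rightarrow> (int \<Rightarrow> 'a)" where
  "shift x = (\<lambda>j. x (j + 1))"

definition shiftZ :: "int \<Rightarrow> (int \<Rightarrow> 'a) \<Rightarrow> (int \<Rightarrow> 'a)" where
  "shiftZ j x = (\<lambda>i. x (i + j))"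

text \<open>Measurable structure on A^Z: product of discrete sigma algebras
  (for finite A this is the Borel sigma algebra of the product topology).\<close>
definition seqM :: "(int \<Rightarrow> 'a) measure" where
  "seqM = (\<Pi>\<^sub>M i\<in>(UNIV::int set). count_space UNIV)"

definition is_1step_SFT :: "(int \<Rightarrow> 'a) set \<Rightarrow> bool" where
  "is_1step_SFT X \<longleftrightarrow> X \<noteq> {} \<and> shift ` X = X \<and>
     (\<exists>Fb :: ('a \<times> 'a) set. X = {x. \<forall>j. (x j, x (j + 1)) \<notin> Fb})"

definition transitive_shift :: "(int \<Rightarrow> 'a) set \<Rightarrow> bool" where
  "transitive_shift X \<longleftrightarrow> (\<exists>D::nat. \<forall>x1\<in>X. \<forall>x2\<in>X. \<forall>b1 a2::int. a2 - b1 \<ge> int D \<longrightarrow>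
      (\<exists>x'\<in>X. (\<forall>j\<le>b1. x' j = x1 j) \<and> (\<forall>j\<ge>a2. x' j = x2 j)))"

definition inv_probs :: "(int \<Rightarrow> 'a) set \<Rightarrow> (int \<Rightarrow> 'a) measure set" where
  "inv_probs X = {\<mu>. sets \<mu> = sets seqM \<and> prob_space \<mu> \<and> emeasure \<mu> X = 1
       \<and> distr \<mu> \<mu> shift = \<mu>}"

definition inv_probs2 :: "(int \<Rightarrow> 'a) set \<Rightarrow> (int \<Rightarrow> 'a) set
      \<Rightarrow> ((int \<Rightarrow> 'a) \<times> (int \<Rightarrow> 'a)) measure set" where
  "inv_probs2 X Y = {m. sets m = sets (seqM \<Otimes>\<^sub>M seqM) \<and> prob_space m
       \<and> emeasure m (X \<times> Y) = 1
       \<and> distr m m (\<lambda>(x, y). (shift x, shift y)) = m}"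

definition potf :: "('a \<Rightarrow> 'a \<Rightarrow> real) \<Rightarrow> (int \<Rightarrow> 'a) \<times> (int \<Rightarrow> 'a) \<Rightarrow> real" where
  "potf F = (\<lambda>(x, y). F (x 0) (y 0))"

text \<open>psi_f(nu) = min over joinings; written as Inf (the minimum is attained).\<close>
definition psi :: "('a \<Rightarrow> 'a \<Rightarrow> real) \<Rightarrow> (int \<Rightarrow> 'a) set \<Rightarrow> (int \<Rightarrow> 'a) set
      \<Rightarrow> (int \<Rightarrow> 'a) measure \<Rightarrow> real" where
  "psi F X Y \<nu> = Inf {integral\<^sup>L m (potf F) | m. m \<in> inv_probs2 X Y \<and> distr m seqM snd = \<nu>}"

definition alpha :: "('a \<Rightarrow> 'a \<Rightarrow> real) \<Rightarrow> (int \<Rightarrow> 'a) set \<Rightarrow> (int \<Rightarrow> 'a) set \<Rightarrow> real" where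
  "alpha F X Y = (SUP \<nu>\<in>inv_probs Y. psi F X Y \<nu>)"

definition birk :: "('a \<Rightarrow> 'a \<Rightarrow> real) \<Rightarrow> int \<Rightarrow> int \<Rightarrow> (int \<Rightarrow> 'a) \<Rightarrow> (int \<Rightarrow> 'a) \<Rightarrow> real" where
  "birk F a b x y = (\<Sum>j = a..b. potf F (shiftZ j x, shiftZ j y))"

definition Pab :: "(int \<Rightarrow> 'a) set \<Rightarrow> int \<Rightarrow> int \<Rightarrow> ('a \<times> 'a) set" where
  "Pab X a b = {(v1, v2). \<exists>x\<in>X. x a = v1 \<and> x b = v2}"

definition Hab :: "('a \<Rightarrow> 'a \<Rightarrow> real) \<Rightarrow> (int \<Rightarrow> 'a) set \<Rightarrow> int \<Rightarrow> int \<Rightarrow> 'a \<Rightarrow> 'a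
      \<Rightarrow> (int \<Rightarrow> 'a) \<Rightarrow> real" where
  "Hab F X a b v1 v2 y = Min {birk F a b x y | x. x \<in> X \<and> x a = v1 \<and> x b = v2}"

definition YfC :: "('a \<Rightarrow> 'a \<Rightarrow> real) \<Rightarrow> (int \<Rightarrow> 'a) set \<Rightarrow> (int \<Rightarrow> 'a) set \<Rightarrow> real
      \<Rightarrow> (int \<Rightarrow> 'a) set" where
  "YfC F X Y C = {y \<in> Y. \<forall>a b::int. a \<le> b \<longrightarrow>
      (\<exists>(v1, v2)\<in>Pab X a b.
         Hab F X a b v1 v2 y \<ge>
           Max {Hab F X a b v1 v2 y' | y'. y' \<in> Y \<and> (\<forall>j. j \<notin> {a..b} \<longrightarrow> y' j = y j)} - C)}"

end

theory Submission
  imports Defs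
begin

text \<open>Write \<open>opt_cost n y\<close> for the least cost \<open>\<Sum>j\<in>{0..<n}. F (x j) (y j)\<close> of a path \<open>x\<close> of
  \<open>X\<close> along the window \<open>[0, n)\<close> of \<open>y\<close>.  For every joining \<open>m\<close> of \<open>\<nu>\<close>, invariance gives
  \<open>\<integral> opt_cost n d\<nu> \<le> n \<integral> f dm\<close>.  Conversely, concatenating optimal \<open>N\<close>-blocks of \<open>y\<close>, glued
  together by transitivity of \<open>X\<close>, and averaging over the \<open>N\<close> phases yields a joining \<open>m\<close> of
  \<open>\<nu>\<close> with \<open>N \<integral> f dm \<le> \<integral> opt_cost N d\<nu> + O(D)\<close>.  So \<open>\<psi>(\<nu>)\<close> is
  \<open>(1/N) \<integral> opt_cost N d\<nu>\<close> up to \<open>O(1/N)\<close>.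

  If \<open>y \<in> Y\<^sub>f\<^sub>,\<^sub>C\<close>, transitivity of \<open>Y\<close> lets us splice any \<open>y' \<in> Y\<close> into \<open>y\<close> on
  \<open>[D, n - D)\<close> without changing \<open>y\<close> outside \<open>[0, n)\<close>; the defining inequality of
  \<open>Y\<^sub>f\<^sub>,\<^sub>C\<close> then gives \<open>opt_cost n y \<ge> opt_cost (n - 2D) y' - C - O(D)\<close>.  Integrating
  against \<open>\<nu>\<^sub>0\<close> and taking \<open>y'\<close> with \<open>opt_cost (n - 2D) y' \<ge> \<integral> opt_cost (n - 2D) d\<nu>\<close> gives
  \<open>n \<psi>(\<nu>\<^sub>0) \<ge> (n - 2D) \<psi>(\<nu>) - O(1)\<close>, hence \<open>\<psi>(\<nu>\<^sub>0) \<ge> \<psi>(\<nu>)\<close> as \<open>n \<rightarrow> \<infinity>\<close>.\<close>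

lemma sum_le_if_eq_outside:
  fixes g1 g2 :: "'i \<Rightarrow> real"
  assumes "finite J" "finite E" "\<And>j. j \<in> J - E \<Longrightarrow> g1 j = g2 j"
    and "\<And>j. \<bar>g1 j\<bar> \<le> B" "\<And>j. \<bar>g2 j\<bar> \<le> B"
  shows "sum g1 J \<le> sum g2 J + 2 * B * card E"
proof -
  have B: "0 \<le> B"
    using assms(4)[of undefined] by linarith
  have "sum g1 (J \<inter> E) \<le> sum (\<lambda>j. g2 j + 2 * B) (J \<inter> E)"
    by (rule sum_mono) (use assms(4,5) in \<open>smt (verit)\<close>)
  also have "\<dots> \<le> sum g2 (J \<inter> E) + 2 * B * card E"
    using B card_mono[OF assms(2), of "J \<inter> E"] by (simp add: sum.distrib mult.commute mult_left_mono)
  finally have "sum g1 (J \<inter> E) \<le> sum g2 (J \<inter> E) + 2 * B * card E" .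
  moreover have "sum g1 (J - E) = sum g2 (J - E)"
    using assms(3) by (rule sum.cong[OF refl])
  ultimately show ?thesis
    using sum.Int_Diff[OF assms(1), of g1 E] sum.Int_Diff[OF assms(1), of g2 E] by linarith
qed

lemma sum_subset_minus_le:
  fixes g :: "'i \<Rightarrow> real"
  assumes "finite J" "J' \<subseteq> J" "\<And>j. \<bar>g j\<bar> \<le> B"
  shows "sum g J' - B * card (J - J') \<le> sum g J"
proof -
  have "sum (\<lambda>_. - B) (J - J') \<le> sum g (J - J')"
    by (rule sum_mono) (use assms(3) in \<open>smt (verit)\<close>)
  moreover have "sum g J = sum g (J - J') + sum g J'"
    using assms(2,1) by (rule sum.subset_diff)
  ultimately show ?thesis
    by (simp add: mult.commute)
qed

lemma le_of_eventually_linear_bound: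
  fixes p q a K :: real
  assumes "\<And>n. k \<le> n \<Longrightarrow> (real n - a) * p \<le> real n * q + K"
  shows "p \<le> q"
proof (rule ccontr)
  assume "\<not> p \<le> q"
  then have pq: "0 < p - q"
    by simp
  obtain n :: nat where n: "max (real k) ((K + a * p) / (p - q)) < n"
    using reals_Archimedean2 by blast
  then have "K + a * p < n * (p - q)"
    using pq by (simp add: pos_divide_less_eq)
  moreover have "(real n - a) * p \<le> real n * q + K"
    using n by (intro assms) simp
  ultimately show False
    by (simp add: algebra_simps)
qed

lemma (in prob_space) AE_mem_of_emeasure_eq_1: "emeasure M A = 1 \<Longrightarrow> AE x in M. x \<in> A"
  by (rule AE_prob_1) (simp add: measure_def)

lemma (in prob_space) integral_le_value:
  fixes g :: "'a \<Rightarrow> real"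
  assumes "integrable M g" "finite (g ` Y)" "Y \<noteq> {}" "AE x in M. x \<in> Y"
  shows "\<exists>y\<in>Y. integral\<^sup>L M g \<le> g y"
proof -
  have "Max (g ` Y) \<in> g ` Y"
    using assms(2,3) by (intro Max_in) simp_all
  then obtain y where y: "y \<in> Y" "g y = Max (g ` Y)"
    by force
  have "AE x in M. g x \<le> g y"
    using assms(4) by eventually_elim (simp add: y(2) assms(2))
  then have "integral\<^sup>L M g \<le> integral\<^sup>L M (\<lambda>_. g y)"
    using assms(1) by (intro integral_mono_AE) auto
  then show ?thesis
    using y(1) by (auto simp: prob_space)
qed

lemma space_seqM [simp]: "space seqM = UNIV"
  by (simp add: seqM_def space_PiM)

lemma shiftZ_apply [simp]: "shiftZ k x i = x (i + k)"
  by (simp add: shiftZ_def)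

lemma shiftZ_0 [simp]: "shiftZ 0 x = x"
  by (simp add: shiftZ_def)

lemma funpow_shift_eq_shiftZ: "(shift ^^ n) x = shiftZ (int n) x"
  by (induction n arbitrary: x) (auto simp: shift_def shiftZ_def ac_simps)

lemma funpow_shift_apply [simp]: "(shift ^^ n) x i = x (i + int n)"
  by (simp add: funpow_shift_eq_shiftZ)

lemma finite_image_finitely_determined:
  fixes g :: "('i \<Rightarrow> 'a::finite) \<Rightarrow> 'b"
  assumes "finite J" and "\<And>y y'. (\<And>i. i \<in> J \<Longrightarrow> y i = y' i) \<Longrightarrow> g y = g y'"
  shows "finite (g ` S)"
proof -
  have "g y = g (restrict y J)" for y
    by (rule assms(2)) simp
  then have "g ` S \<subseteq> g ` (J \<rightarrow>\<^sub>E UNIV)"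
    by (metis image_subsetI restrict_PiE_iff UNIV_I rev_image_eqI)
  moreover have "finite (J \<rightarrow>\<^sub>E (UNIV :: 'a set))"
    using assms(1) by (rule finite_PiE) simp
  ultimately show ?thesis
    using finite_surj by blast
qed

lemma measurable_seqM_finitely_determined:
  fixes g :: "(int \<Rightarrow> 'a::finite) \<Rightarrow> 'b"
  assumes J: "finite J" and det: "\<And>y y'. (\<And>i. i \<in> J \<Longrightarrow> y i = y' i) \<Longrightarrow> g y = g y'"
    and range: "\<And>y. g y \<in> space N"
  shows "g \<in> measurable seqM N"
proof (rule measurableI)
  fix B
  define R where "R = (\<lambda>y. restrict y J) ` {y. g y \<in> B}"
  have R_PiE: "R \<subseteq> J \<rightarrow>\<^sub>E UNIV"
    unfolding R_def by auto
  have "g -` B \<inter> space seqM = (\<lambda>y. restrict y J) -` R \<inter> space seqM"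
  proof -
    have "g y \<in> B" if "restrict y J = restrict y' J" "g y' \<in> B" for y y'
      using that det[of y y'] by (metis restrict_apply')
    then show ?thesis
      unfolding R_def by auto
  qed
  moreover have "R \<in> sets (\<Pi>\<^sub>M i\<in>J. count_space UNIV)"
  proof -
    have "(\<Pi>\<^sub>E i\<in>J. {w i}) = {w}" if "w \<in> R" for w
      using that R_PiE by (intro PiE_singleton) (auto simp: PiE_iff)
    then have "R = (\<Union>w\<in>R. \<Pi>\<^sub>E i\<in>J. {w i})"
      by auto
    also have "\<dots> \<in> sets (\<Pi>\<^sub>M i\<in>J. count_space UNIV)"
      using R_PiE J finite_subset[OF R_PiE finite_PiE[OF J, of "\<lambda>_. UNIV :: 'a set"]]
      by (intro sets.finite_UN sets_PiM_I_finite) auto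
    finally show ?thesis .
  qed
  moreover have "(\<lambda>y. restrict y J) \<in> measurable seqM (\<Pi>\<^sub>M i\<in>J. count_space UNIV)"
    unfolding seqM_def by (rule measurable_restrict_subset) simp
  ultimately show "g -` B \<inter> space seqM \<in> sets seqM"
    using measurable_sets by metis
qed (rule range)

lemma measurable_seqM_coord [measurable]:
  "(\<lambda>x :: int \<Rightarrow> 'a::finite. x i) \<in> measurable seqM (count_space UNIV)"
  by (rule measurable_seqM_finitely_determined[of "{i}"]) auto

lemma measurable_into_seqM:
  assumes "\<And>i. (\<lambda>w. h w i) \<in> measurable M (count_space UNIV)"
  shows "h \<in> measurable M seqM"
  unfolding seqM_def by (rule measurable_PiM_single') (use assms in auto)

lemma measurable_shift [measurable]:
  "(shift :: (int \<Rightarrow> 'a::finite) \<Rightarrow> _) \<in> measurable seqM seqM"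
  by (rule measurable_into_seqM) (simp add: shift_def)

lemma measurable_potf [measurable]:
  "potf (F :: 'a::finite \<Rightarrow> _) \<in> borel_measurable (seqM \<Otimes>\<^sub>M seqM)"
proof -
  have "(\<lambda>p. fst p 0) \<in> measurable (seqM \<Otimes>\<^sub>M seqM) (count_space (UNIV :: 'a set))"
    by (rule measurable_compose[OF measurable_fst measurable_seqM_coord])
  moreover have "(\<lambda>p. snd p 0) \<in> measurable (seqM \<Otimes>\<^sub>M seqM) (count_space (UNIV :: 'a set))"
    by (rule measurable_compose[OF measurable_snd measurable_seqM_coord])
  ultimately have "(\<lambda>p :: (int \<Rightarrow> 'a) \<times> (int \<Rightarrow> 'a). (fst p 0, snd p 0)) \<in> measurable (seqM \<Otimes>\<^sub>M seqM)
          (count_space UNIV \<Otimes>\<^sub>M count_space (UNIV :: 'a set))"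
    by (rule measurable_Pair)
  moreover have "(\<lambda>(a, b). F a b) \<in> borel_measurable
          (count_space UNIV \<Otimes>\<^sub>M count_space (UNIV :: 'a set))"
    by (simp add: pair_measure_countable)
  ultimately have "(\<lambda>(a, b). F a b) \<circ> (\<lambda>p. (fst p 0, snd p 0)) \<in> borel_measurable (seqM \<Otimes>\<^sub>M seqM)"
    by (rule measurable_comp)
  then show ?thesis
    by (simp add: potf_def comp_def case_prod_beta)
qed

definition shift_pair :: "(int \<Rightarrow> 'a) \<times> (int \<Rightarrow> 'a) \<Rightarrow> (int \<Rightarrow> 'a) \<times> (int \<Rightarrow> 'a)" where
  "shift_pair = (\<lambda>(x, y). (shift x, shift y))"

lemma measurable_shift_pair [measurable]:
  "(shift_pair :: (int \<Rightarrow> 'a::finite) \<times> _ \<Rightarrow> _) \<in> measurable (seqM \<Otimes>\<^sub>M seqM) (seqM \<Otimes>\<^sub>M seqM)"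
  unfolding shift_pair_def by measurable

lemma funpow_shift_pair: "(shift_pair ^^ k) (x, y) = ((shift ^^ k) x, (shift ^^ k) y)"
  by (induction k) (simp_all add: shift_pair_def del: funpow_shift_apply)

lemma measurable_funpow_shift_pair [measurable]:
  "((shift_pair :: (int \<Rightarrow> 'a::finite) \<times> _ \<Rightarrow> _) ^^ k) \<in> measurable (seqM \<Otimes>\<^sub>M seqM) (seqM \<Otimes>\<^sub>M seqM)"
  by (induction k) auto

lemma potf_funpow_shift_pair: "potf F ((shift_pair ^^ k) p) = F (fst p (int k)) (snd p (int k))"
  by (cases p) (simp add: funpow_shift_pair potf_def)

definition Fbound :: "('a::finite \<Rightarrow> 'a \<Rightarrow> real) \<Rightarrow> real" where
  "Fbound F = Max (range (\<lambda>(a, b). \<bar>F a b\<bar>))"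

lemma abs_le_Fbound: "\<bar>F a b\<bar> \<le> Fbound F"
  unfolding Fbound_def by (rule Max_ge) (auto intro: rev_image_eqI[of "(a, b)"])

lemma Fbound_nonneg: "0 \<le> Fbound F"
  using abs_le_Fbound[of F undefined undefined] by linarith

lemma abs_potf_le_Fbound: "\<bar>potf F p\<bar> \<le> Fbound F"
  by (cases p) (simp add: potf_def abs_le_Fbound)

lemma is_1step_SFT_sets:
  assumes "is_1step_SFT (X :: (int \<Rightarrow> 'a::finite) set)"
  shows "X \<in> sets seqM"
proof -
  obtain Fb where X: "X = {x. \<forall>j. (x j, x (j + 1)) \<notin> Fb}"
    using assms unfolding is_1step_SFT_def by blast
  have "(\<lambda>x. (x j, x (j + 1))) -` (- Fb) \<inter> space seqM \<in> sets seqM" for j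
  proof (rule measurable_sets)
    show "(\<lambda>x :: int \<Rightarrow> 'a. (x j, x (j + 1))) \<in> measurable seqM (count_space UNIV)"
      by (rule measurable_seqM_finitely_determined[of "{j, j + 1}"]) auto
  qed simp
  then have "(\<Inter>j. (\<lambda>x. (x j, x (j + 1))) -` (- Fb) \<inter> space seqM) \<in> sets seqM"
    using sets.countable_INT[of "\<lambda>j. (\<lambda>x. (x j, x (j + 1))) -` (- Fb) \<inter> space seqM" UNIV seqM]
    by blast
  moreover have "X = (\<Inter>j. (\<lambda>x. (x j, x (j + 1))) -` (- Fb) \<inter> space seqM)"
    unfolding X by auto
  ultimately show ?thesis
    by (simp only:)
qed

lemma is_1step_SFT_shiftZ:
  assumes "is_1step_SFT X" "x \<in> X"
  shows "shiftZ k x \<in> X"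
proof -
  obtain Fb where X: "X = {x. \<forall>j. (x j, x (j + 1)) \<notin> Fb}"
    using assms(1) unfolding is_1step_SFT_def by blast
  have "(x (j + k), x (j + k + 1)) \<notin> Fb" for j
    using assms(2) unfolding X by blast
  then show ?thesis
    unfolding X by (simp add: ac_simps)
qed

lemma is_1step_SFT_memI:
  assumes "is_1step_SFT X" "\<And>t. \<exists>x\<in>X. x t = z t \<and> x (t + 1) = z (t + 1)"
  shows "z \<in> X"
proof -
  obtain Fb where X: "X = {x. \<forall>j. (x j, x (j + 1)) \<notin> Fb}"
    using assms(1) unfolding is_1step_SFT_def by blast
  have "(z t, z (t + 1)) \<notin> Fb" for t
  proof -
    obtain x where "x \<in> X" "x t = z t" "x (t + 1) = z (t + 1)"
      using assms(2) by blast
    then show ?thesis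
      unfolding X by (metis (mono_tags, lifting) mem_Collect_eq)
  qed
  then show ?thesis
    unfolding X by blast
qed

definition splices_within :: "nat \<Rightarrow> (int \<Rightarrow> 'a) set \<Rightarrow> bool" where
  "splices_within D X \<longleftrightarrow> (\<forall>x1\<in>X. \<forall>x2\<in>X. \<forall>b1 a2. int D \<le> a2 - b1 \<longrightarrow>
      (\<exists>x\<in>X. (\<forall>j\<le>b1. x j = x1 j) \<and> (\<forall>j\<ge>a2. x j = x2 j)))"

lemma transitive_shift_iff_splices_within: "transitive_shift X \<longleftrightarrow> (\<exists>D. splices_within D X)"
  unfolding transitive_shift_def splices_within_def by simp

lemma splices_within_mono:
  assumes "splices_within D X" "D \<le> D'"
  shows "splices_within D' X"
  using assms unfolding splices_within_def by (smt (verit) of_nat_mono)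

lemma splices_withinE:
  assumes "splices_within D X" "x1 \<in> X" "x2 \<in> X" "int D \<le> b - a"
  obtains x where "x \<in> X" "\<And>j. j \<le> a \<Longrightarrow> x j = x1 j" "\<And>j. b \<le> j \<Longrightarrow> x j = x2 j"
  using assms unfolding splices_within_def by blast

section \<open>Invariant measures and joinings\<close>

lemma inv_probsD:
  assumes "\<nu> \<in> inv_probs Y"
  shows "sets \<nu> = sets seqM" "prob_space \<nu>" "emeasure \<nu> Y = 1" "distr \<nu> \<nu> shift = \<nu>"
  using assms unfolding inv_probs_def by auto

lemma inv_probs2D:
  assumes "m \<in> inv_probs2 X Y"
  shows "sets m = sets (seqM \<Otimes>\<^sub>M seqM)" "prob_space m" "emeasure m (X \<times> Y) = 1"
    "distr m m shift_pair = m"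
  using assms unfolding inv_probs2_def shift_pair_def by auto

lemma distr_funpow_shift_invariant:
  assumes "sets \<nu> = sets (seqM :: (int \<Rightarrow> 'a::finite) measure)" "distr \<nu> \<nu> shift = \<nu>"
  shows "distr \<nu> \<nu> (shift ^^ n) = \<nu>"
proof (induction n)
  case 0
  show ?case
    by (simp add: distr_id2)
next
  case (Suc n)
  have meas: "measurable \<nu> \<nu> = measurable seqM seqM"
    by (rule measurable_cong_sets[OF assms(1) assms(1)])
  have "distr \<nu> \<nu> (shift ^^ Suc n) = distr \<nu> \<nu> ((shift ^^ n) \<circ> shift)"
    by (simp only: funpow_Suc_right)
  also have "\<dots> = distr (distr \<nu> \<nu> shift) \<nu> (shift ^^ n)"
    by (rule distr_distr[symmetric]) (simp_all add: meas)
  also have "\<dots> = \<nu>"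
    unfolding assms(2) by (rule Suc.IH)
  finally show ?case .
qed

lemma emeasure_funpow_shift_vimage:
  assumes "sets \<nu> = sets (seqM :: (int \<Rightarrow> 'a::finite) measure)" "distr \<nu> \<nu> shift = \<nu>"
    and "B \<in> sets seqM"
  shows "emeasure \<nu> ((shift ^^ n) -` B) = emeasure \<nu> B"
proof -
  have "space \<nu> = UNIV"
    using sets_eq_imp_space_eq[OF assms(1)] by simp
  moreover have "emeasure (distr \<nu> \<nu> (shift ^^ n)) B = emeasure \<nu> ((shift ^^ n) -` B \<inter> space \<nu>)"
    using assms(1,3) by (intro emeasure_distr) (simp_all add: measurable_cong_sets[OF assms(1) assms(1)])
  ultimately show ?thesis
    using distr_funpow_shift_invariant[OF assms(1,2)] by simp
qed

lemma integral_potf_funpow_shift_pair: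
  assumes "m \<in> inv_probs2 X (Y :: (int \<Rightarrow> 'a::finite) set)"
  shows "(\<integral>p. potf F ((shift_pair ^^ j) p) \<partial>m) = integral\<^sup>L m (potf F)"
proof (induction j)
  case (Suc j)
  have meas: "measurable m N = measurable (seqM \<Otimes>\<^sub>M seqM) N" for N :: "'b measure"
    using inv_probs2D(1)[OF assms] by (rule measurable_cong_sets) simp
  have "(\<integral>p. potf F ((shift_pair ^^ Suc j) p) \<partial>m) = (\<integral>p. potf F ((shift_pair ^^ j) (shift_pair p)) \<partial>m)"
    by (simp only: funpow_Suc_right comp_def)
  also have "\<dots> = (\<integral>p. potf F ((shift_pair ^^ j) p) \<partial>distr m m shift_pair)"
    by (rule integral_distr[symmetric])
      (simp_all add: meas measurable_cong_sets[OF refl inv_probs2D(1)[OF assms]])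
  also have "\<dots> = integral\<^sup>L m (potf F)"
    unfolding inv_probs2D(4)[OF assms] by (rule Suc.IH)
  finally show ?case .
qed simp

lemma integrable_potf_funpow_shift_pair:
  assumes "m \<in> inv_probs2 X (Y :: (int \<Rightarrow> 'a::finite) set)"
  shows "integrable m (\<lambda>p. potf F ((shift_pair ^^ j) p))"
proof -
  interpret prob_space m
    using inv_probs2D(2)[OF assms] .
  show ?thesis
    using measurable_compose[OF measurable_funpow_shift_pair measurable_potf] abs_potf_le_Fbound[of F]
    by (intro integrable_const_bound[where B="Fbound F"])
      (simp_all add: measurable_cong_sets[OF inv_probs2D(1)[OF assms] refl])
qed

lemma integrable_potf:
  assumes "m \<in> inv_probs2 X (Y :: (int \<Rightarrow> 'a::finite) set)"
  shows "integrable m (potf F)"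
  using integrable_potf_funpow_shift_pair[OF assms, of F 0] by simp

lemma integral_potf_ge:
  assumes "m \<in> inv_probs2 X (Y :: (int \<Rightarrow> 'a::finite) set)"
  shows "- Fbound F \<le> integral\<^sup>L m (potf F)"
proof -
  interpret prob_space m
    using inv_probs2D(2)[OF assms] .
  have "- Fbound F \<le> potf F p" for p
    using abs_potf_le_Fbound[of F p] by linarith
  then have "integral\<^sup>L m (\<lambda>_. - Fbound F) \<le> integral\<^sup>L m (potf F)"
    using integrable_potf[OF assms] by (intro integral_mono) auto
  then show ?thesis
    by (simp add: prob_space)
qed

lemma psi_le_integral:
  assumes "m \<in> inv_probs2 X (Y :: (int \<Rightarrow> 'a::finite) set)" "distr m seqM snd = \<nu>"
  shows "psi F X Y \<nu> \<le> integral\<^sup>L m (potf F)"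
  unfolding psi_def
proof (rule cInf_lower)
  show "bdd_below {integral\<^sup>L m (potf F) |m. m \<in> inv_probs2 X Y \<and> distr m seqM snd = \<nu>}"
    by (rule bdd_belowI[where m="- Fbound F"]) (auto intro: integral_potf_ge)
qed (use assms in blast)

lemma psi_ge:
  assumes "\<exists>m \<in> inv_probs2 X Y. distr m seqM snd = \<nu>"
    and "\<And>m. m \<in> inv_probs2 X Y \<Longrightarrow> distr m seqM snd = \<nu> \<Longrightarrow> c \<le> integral\<^sup>L m (potf F)"
  shows "c \<le> psi F X Y \<nu>"
  unfolding psi_def by (rule cInf_greatest) (use assms in auto)

section \<open>Averaging a periodic construction over its phase\<close>

text \<open>A map \<open>\<Phi>\<close> commuting only with \<open>shift ^^ N\<close> gives the joining \<open>y \<mapsto> (\<Phi> y, y)\<close>, which is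
  invariant only under the \<open>N\<close>-th power of the shift; averaging its \<open>N\<close> shifted copies restores
  full invariance.\<close>

definition phase_average :: "nat \<Rightarrow> ((int \<Rightarrow> 'a) \<Rightarrow> (int \<Rightarrow> 'a)) \<Rightarrow> (int \<Rightarrow> 'a) measure
      \<Rightarrow> ((int \<Rightarrow> 'a) \<times> (int \<Rightarrow> 'a)) measure" where
  "phase_average N \<Phi> \<nu> = distr (measure_pmf (pmf_of_set {..<N}) \<Otimes>\<^sub>M \<nu>) (seqM \<Otimes>\<^sub>M seqM)
     (\<lambda>(k, y). (shift_pair ^^ k) (\<Phi> y, y))"

context
  fixes N :: nat and \<Phi> :: "(int \<Rightarrow> 'a::finite) \<Rightarrow> (int \<Rightarrow> 'a)" and \<nu> :: "(int \<Rightarrow> 'a) measure"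
  assumes N_pos: "0 < N" and \<Phi>_meas: "\<Phi> \<in> measurable seqM seqM"
    and sets_\<nu>: "sets \<nu> = sets seqM" and prob_\<nu>: "prob_space \<nu>" and shift_inv_\<nu>: "distr \<nu> \<nu> shift = \<nu>"
begin

private abbreviation P where "P \<equiv> measure_pmf (pmf_of_set {..<N}) \<Otimes>\<^sub>M \<nu>"

private lemma sets_P: "sets P = sets (count_space UNIV \<Otimes>\<^sub>M seqM)"
  by (rule sets_pair_measure_cong[OF sets_measure_pmf_count_space sets_\<nu>])

private lemma space_P: "space P = UNIV"
  using sets_eq_imp_space_eq[OF sets_P] by (simp add: space_pair_measure)

private lemma measurable_P: "measurable P M = measurable (count_space UNIV \<Otimes>\<^sub>M seqM) M"
  by (rule measurable_cong_sets[OF sets_P refl])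

private lemma pair_prob_space_P: "pair_prob_space (measure_pmf (pmf_of_set {..<N})) \<nu>"
  using prob_\<nu> by (simp add: pair_prob_space_def pair_sigma_finite_def prob_space_measure_pmf
      prob_space_imp_sigma_finite)

private lemma measurable_phase_section:
  "(\<lambda>y. (shift_pair ^^ k) (\<Phi> y, y)) \<in> measurable seqM (seqM \<Otimes>\<^sub>M seqM)"
proof -
  have "(\<lambda>y. (\<Phi> y, y)) \<in> measurable seqM (seqM \<Otimes>\<^sub>M seqM)"
    using \<Phi>_meas by (rule measurable_Pair) simp
  then show ?thesis
    by (rule measurable_compose) (rule measurable_funpow_shift_pair)
qed

private lemma sets_phase_section:
  assumes "B \<in> sets (seqM \<Otimes>\<^sub>M seqM)"
  shows "{y. (shift_pair ^^ k) (\<Phi> y, y) \<in> B} \<in> sets seqM"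
  using measurable_sets[OF measurable_phase_section assms] by (simp add: vimage_def)

private lemma measurable_phase_map:
  "(\<lambda>(k, y). (shift_pair ^^ k) (\<Phi> y, y)) \<in> measurable P (seqM \<Otimes>\<^sub>M seqM)"
  unfolding measurable_P
  by (intro measurable_pair_measure_countable1) (auto intro: measurable_phase_section)

private lemma emeasure_P:
  assumes "E \<in> sets P"
  shows "emeasure P E = (\<Sum>k<N. emeasure \<nu> (Pair k -` E)) / N"
proof -
  interpret prob_space \<nu>
    by (rule prob_\<nu>)
  have "emeasure P E = (\<integral>\<^sup>+k. emeasure \<nu> (Pair k -` E) \<partial>measure_pmf (pmf_of_set {..<N}))"
    using assms by (rule emeasure_pair_measure_alt)
  also have "\<dots> = (\<Sum>k<N. emeasure \<nu> (Pair k -` E)) / N"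
    using N_pos by (subst nn_integral_pmf_of_set) auto
  finally show ?thesis .
qed

lemma emeasure_phase_average:
  assumes "B \<in> sets (seqM \<Otimes>\<^sub>M seqM)"
  shows "emeasure (phase_average N \<Phi> \<nu>) B = (\<Sum>k<N. emeasure \<nu> {y. (shift_pair ^^ k) (\<Phi> y, y) \<in> B}) / N"
proof -
  let ?G = "\<lambda>(k, y). (shift_pair ^^ k) (\<Phi> y, y)"
  have "emeasure (phase_average N \<Phi> \<nu>) B = emeasure P (?G -` B \<inter> space P)"
    unfolding phase_average_def using measurable_phase_map assms by (rule emeasure_distr)
  also have "\<dots> = (\<Sum>k<N. emeasure \<nu> (Pair k -` (?G -` B \<inter> space P))) / N"
    using measurable_sets[OF measurable_phase_map assms] by (rule emeasure_P)
  finally show ?thesis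
    by (simp add: space_P vimage_def)
qed

lemma sets_phase_average: "sets (phase_average N \<Phi> \<nu>) = sets (seqM \<Otimes>\<^sub>M seqM)"
  by (simp add: phase_average_def)

lemma space_phase_average: "space (phase_average N \<Phi> \<nu>) = UNIV"
  by (simp add: phase_average_def space_pair_measure)

lemma prob_space_phase_average: "prob_space (phase_average N \<Phi> \<nu>)"
proof -
  interpret pair_prob_space "measure_pmf (pmf_of_set {..<N})" \<nu>
    by (rule pair_prob_space_P)
  show ?thesis
    unfolding phase_average_def using measurable_phase_map by (rule prob_space_distr)
qed

lemma snd_phase_average: "distr (phase_average N \<Phi> \<nu>) seqM snd = \<nu>"
proof (rule measure_eqI)
  show "sets (distr (phase_average N \<Phi> \<nu>) seqM snd) = sets \<nu>"
    using sets_\<nu> by simp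
next
  fix B assume "B \<in> sets (distr (phase_average N \<Phi> \<nu>) seqM snd)"
  then have B: "B \<in> sets seqM"
    by simp
  have "emeasure (distr (phase_average N \<Phi> \<nu>) seqM snd) B = emeasure (phase_average N \<Phi> \<nu>) (UNIV \<times> B)"
    using B by (subst emeasure_distr)
      (auto simp: sets_phase_average space_phase_average measurable_cong_sets[OF sets_phase_average refl]
        intro!: arg_cong[where f="emeasure _"])
  also have "\<dots> = (\<Sum>k<N. emeasure \<nu> ((shift ^^ k) -` B)) / N"
  proof -
    have "(UNIV :: (int \<Rightarrow> 'a) set) \<times> B \<in> sets (seqM \<Otimes>\<^sub>M seqM)"
      using pair_measureI[OF sets.top[of seqM] B] by simp
    then show ?thesis
      by (simp add: emeasure_phase_average funpow_shift_pair vimage_def)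
  qed
  also have "\<dots> = emeasure \<nu> B"
    using N_pos B by (simp add: emeasure_funpow_shift_vimage[OF sets_\<nu> shift_inv_\<nu>]
        ennreal_mult_divide_eq mult.commute[of "of_nat N"])
  finally show "emeasure (distr (phase_average N \<Phi> \<nu>) seqM snd) B = emeasure \<nu> B" .
qed

lemma phase_average_shift_pair_invariant:
  assumes equivariant: "\<And>y. \<Phi> ((shift ^^ N) y) = (shift ^^ N) (\<Phi> y)"
  shows "distr (phase_average N \<Phi> \<nu>) (phase_average N \<Phi> \<nu>) shift_pair = phase_average N \<Phi> \<nu>"
    (is "distr ?m ?m shift_pair = ?m")
proof (rule measure_eqI)
  show "sets (distr ?m ?m shift_pair) = sets ?m"
    by simp
next
  fix B assume "B \<in> sets (distr ?m ?m shift_pair)"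
  then have B: "B \<in> sets (seqM \<Otimes>\<^sub>M seqM)"
    by (simp add: sets_phase_average)
  define g where "g k = emeasure \<nu> {y. (shift_pair ^^ k) (\<Phi> y, y) \<in> B}" for k
  have shift_B: "shift_pair -` B \<in> sets (seqM \<Otimes>\<^sub>M seqM)"
    using measurable_sets[OF measurable_shift_pair B] by (simp add: space_pair_measure)
  have "emeasure (distr ?m ?m shift_pair) B = emeasure ?m (shift_pair -` B)"
    using B by (subst emeasure_distr)
      (simp_all add: sets_phase_average space_phase_average measurable_cong_sets[OF sets_phase_average sets_phase_average])
  also have "\<dots> = (\<Sum>k<N. g (Suc k)) / N"
    using shift_B by (simp add: emeasure_phase_average g_def)
  also have "(\<Sum>k<N. g (Suc k)) = (\<Sum>k<N. g k)"
  proof -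
    have "{y. (shift_pair ^^ N) (\<Phi> y, y) \<in> B} = (shift ^^ N) -` {y. (\<Phi> y, y) \<in> B}"
      by (auto simp: funpow_shift_pair equivariant)
    then have "g N = g 0"
      using emeasure_funpow_shift_vimage[OF sets_\<nu> shift_inv_\<nu> sets_phase_section[OF B, of 0], of N]
      unfolding g_def by simp
    moreover obtain M where M: "N = Suc M"
      using N_pos gr0_implies_Suc by blast
    ultimately show ?thesis
      unfolding M sum.lessThan_Suc_shift[of g] sum.lessThan_Suc[of "\<lambda>k. g (Suc k)"] by simp
  qed
  also have "(\<Sum>k<N. g k) / N = emeasure ?m B"
    using B by (simp add: emeasure_phase_average g_def)
  finally show "emeasure (distr ?m ?m shift_pair) B = emeasure ?m B" .
qed

lemma emeasure_phase_average_Times: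
  assumes "is_1step_SFT X" "is_1step_SFT Y" "emeasure \<nu> Y = 1" "\<And>y. y \<in> Y \<Longrightarrow> \<Phi> y \<in> X"
  shows "emeasure (phase_average N \<Phi> \<nu>) (X \<times> Y) = 1"
proof -
  interpret prob_space \<nu>
    by (rule prob_\<nu>)
  have XY: "X \<times> Y \<in> sets (seqM \<Otimes>\<^sub>M seqM)"
    using assms(1,2) by (simp add: is_1step_SFT_sets)
  have "emeasure \<nu> {y. (shift_pair ^^ k) (\<Phi> y, y) \<in> X \<times> Y} = 1" for k
  proof (rule antisym)
    have "Y \<subseteq> {y. (shift_pair ^^ k) (\<Phi> y, y) \<in> X \<times> Y}"
    proof
      fix y assume "y \<in> Y"
      then show "y \<in> {y. (shift_pair ^^ k) (\<Phi> y, y) \<in> X \<times> Y}"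
        using assms(4)[of y] is_1step_SFT_shiftZ[OF assms(1)] is_1step_SFT_shiftZ[OF assms(2)]
        by (simp add: funpow_shift_pair funpow_shift_eq_shiftZ)
    qed
    then have "emeasure \<nu> Y \<le> emeasure \<nu> {y. (shift_pair ^^ k) (\<Phi> y, y) \<in> X \<times> Y}"
      by (rule emeasure_mono) (simp add: sets_\<nu> sets_phase_section[OF XY])
    then show "1 \<le> emeasure \<nu> {y. (shift_pair ^^ k) (\<Phi> y, y) \<in> X \<times> Y}"
      using assms(3) by simp
  qed (rule emeasure_le_1)
  then show ?thesis
    using N_pos by (simp add: emeasure_phase_average[OF XY] divide_eq_1_ennreal)
qed

private lemma integrable_phase_coord:
  fixes F :: "'a \<Rightarrow> 'a \<Rightarrow> real"
  shows "integrable \<nu> (\<lambda>y. F (\<Phi> y (int k)) (y (int k)))"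
proof -
  interpret prob_space \<nu>
    by (rule prob_\<nu>)
  have "(\<lambda>y. potf F ((shift_pair ^^ k) (\<Phi> y, y))) \<in> borel_measurable \<nu>"
    using measurable_compose[OF measurable_phase_section measurable_potf]
    by (simp add: measurable_cong_sets[OF sets_\<nu> refl])
  then have "(\<lambda>y. F (\<Phi> y (int k)) (y (int k))) \<in> borel_measurable \<nu>"
    by (simp add: potf_funpow_shift_pair)
  then show ?thesis
    by (rule integrable_const_bound[where B="Fbound F", rotated]) (simp add: abs_le_Fbound)
qed

lemma integrable_phase_sum:
  fixes F :: "'a \<Rightarrow> 'a \<Rightarrow> real"
  shows "integrable \<nu> (\<lambda>y. \<Sum>k<N. F (\<Phi> y (int k)) (y (int k)))"
  by (rule Bochner_Integration.integrable_sum, rule integrable_phase_coord)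

lemma integral_potf_phase_average:
  "integral\<^sup>L (phase_average N \<Phi> \<nu>) (potf F) = (\<integral>y. (\<Sum>k<N. F (\<Phi> y (int k)) (y (int k))) \<partial>\<nu>) / N"
proof -
  interpret pair_prob_space "measure_pmf (pmf_of_set {..<N})" \<nu>
    by (rule pair_prob_space_P)
  let ?G = "\<lambda>(k, y). (shift_pair ^^ k) (\<Phi> y, y)"
  have integrable_G: "integrable P (\<lambda>p. potf F (?G p))"
    using measurable_compose[OF measurable_phase_map measurable_potf]
    by (intro P.integrable_const_bound[where B="Fbound F"]) (auto simp: abs_potf_le_Fbound)
  have "integral\<^sup>L (phase_average N \<Phi> \<nu>) (potf F) = (\<integral>p. potf F (?G p) \<partial>P)"
    unfolding phase_average_def by (rule integral_distr[OF measurable_phase_map measurable_potf])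
  also have "\<dots> = (\<integral>k. (\<integral>y. potf F (?G (k, y)) \<partial>\<nu>) \<partial>measure_pmf (pmf_of_set {..<N}))"
    using integrable_G by (rule integral_fst'[symmetric])
  also have "\<dots> = (\<Sum>k<N. (\<integral>y. F (\<Phi> y (int k)) (y (int k)) \<partial>\<nu>)) / N"
    using N_pos by (subst integral_pmf_of_set) (auto simp: potf_funpow_shift_pair)
  also have "\<dots> = (\<integral>y. (\<Sum>k<N. F (\<Phi> y (int k)) (y (int k))) \<partial>\<nu>) / N"
    using integrable_phase_coord by (subst Bochner_Integration.integral_sum) auto
  finally show ?thesis .
qed

end

section \<open>Optimal costs\<close>

lemma Hab_cong:
  assumes "\<And>j. a \<le> j \<Longrightarrow> j \<le> b \<Longrightarrow> y j = y' j"
  shows "Hab F X a b v1 v2 y = Hab F X a b v1 v2 y'"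
proof -
  have "birk F a b x y = birk F a b x y'" for x
    unfolding birk_def potf_def using assms by (intro sum.cong) auto
  then show ?thesis
    unfolding Hab_def by simp
qed

lemma finite_Hab_image: "finite ((\<lambda>y. Hab F X a b v1 v2 y) ` (S :: (int \<Rightarrow> 'a::finite) set))"
  by (rule finite_image_finitely_determined[of "{a..b}"]) (auto intro: Hab_cong)

locale SFT_pair =
  fixes X Y :: "(int \<Rightarrow> 'a::finite) set" and F :: "'a \<Rightarrow> 'a \<Rightarrow> real" and D :: nat
  assumes SFT_X: "is_1step_SFT X" and SFT_Y: "is_1step_SFT Y"
    and splice_X: "splices_within D X" and splice_Y: "splices_within D Y"
begin

lemma X_nonempty: "X \<noteq> {}"
  using SFT_X unfolding is_1step_SFT_def by blast

lemma Y_nonempty: "Y \<noteq> {}"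
  using SFT_Y unfolding is_1step_SFT_def by blast

definition cost :: "nat \<Rightarrow> (int \<Rightarrow> 'a) \<Rightarrow> (int \<Rightarrow> 'a) \<Rightarrow> real" where
  "cost n x y = (\<Sum>j\<in>{0..<int n}. F (x j) (y j))"

lemma cost_cong: "(\<And>j. 0 \<le> j \<Longrightarrow> j < int n \<Longrightarrow> y j = y' j) \<Longrightarrow> cost n x y = cost n x y'"
  unfolding cost_def by (rule sum.cong) auto

lemma cost_eq_sum_nat: "cost n x y = (\<Sum>j<n. F (x (int j)) (y (int j)))"
proof -
  have "{0..<int n} = int ` {..<n}"
    by (simp add: atLeast0LessThan[symmetric] image_int_atLeastLessThan)
  then show ?thesis
    unfolding cost_def by (simp add: sum.reindex)
qed

lemma abs_cost_le: "\<bar>cost n x y\<bar> \<le> n * Fbound F"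
proof -
  have "\<bar>cost n x y\<bar> \<le> (\<Sum>j\<in>{0..<int n}. \<bar>F (x j) (y j)\<bar>)"
    unfolding cost_def by (rule sum_abs)
  also have "\<dots> \<le> (\<Sum>j\<in>{0..<int n}. Fbound F)"
    by (rule sum_mono) (rule abs_le_Fbound)
  finally show ?thesis
    by simp
qed

lemma finite_cost_image: "finite ((\<lambda>x. cost n x y) ` S)"
  unfolding cost_def by (rule finite_image_finitely_determined[of "{0..<int n}"]) (auto intro: sum.cong)

definition opt_path :: "nat \<Rightarrow> (int \<Rightarrow> 'a) \<Rightarrow> (int \<Rightarrow> 'a)" where
  "opt_path n y = (SOME x. x \<in> X \<and> (\<forall>x'\<in>X. cost n x y \<le> cost n x' y))"

definition opt_cost :: "nat \<Rightarrow> (int \<Rightarrow> 'a) \<Rightarrow> real" where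
  "opt_cost n y = cost n (opt_path n y) y"

lemma opt_path_spec: "opt_path n y \<in> X \<and> (\<forall>x'\<in>X. cost n (opt_path n y) y \<le> cost n x' y)"
proof -
  have "Min ((\<lambda>x. cost n x y) ` X) \<in> (\<lambda>x. cost n x y) ` X"
    using X_nonempty by (intro Min_in finite_cost_image) simp
  then obtain x where "x \<in> X" "cost n x y = Min ((\<lambda>x. cost n x y) ` X)"
    by force
  then have "x \<in> X \<and> (\<forall>x'\<in>X. cost n x y \<le> cost n x' y)"
    using finite_cost_image by simp
  then show ?thesis
    unfolding opt_path_def by (rule someI[where P = "\<lambda>x. x \<in> X \<and> (\<forall>x'\<in>X. cost n x y \<le> cost n x' y)"])
qed

lemma opt_path_in: "opt_path n y \<in> X"
  using opt_path_spec by blast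

lemma opt_cost_le: "x \<in> X \<Longrightarrow> opt_cost n y \<le> cost n x y"
  using opt_path_spec unfolding opt_cost_def by blast

lemma opt_path_cong:
  assumes "\<And>j. 0 \<le> j \<Longrightarrow> j < int n \<Longrightarrow> y j = y' j"
  shows "opt_path n y = opt_path n y'"
proof -
  have "cost n x y = cost n x y'" for x
    using assms by (rule cost_cong)
  then show ?thesis
    unfolding opt_path_def by simp
qed

lemma opt_cost_cong:
  assumes "\<And>j. 0 \<le> j \<Longrightarrow> j < int n \<Longrightarrow> y j = y' j"
  shows "opt_cost n y = opt_cost n y'"
  unfolding opt_cost_def using opt_path_cong[OF assms] cost_cong[OF assms] by simp

lemma abs_opt_cost_le: "\<bar>opt_cost n y\<bar> \<le> n * Fbound F"
  unfolding opt_cost_def by (rule abs_cost_le)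

lemma finite_opt_cost_image: "finite (opt_cost n ` S)"
  by (rule finite_image_finitely_determined[of "{0..<int n}"]) (auto intro: opt_cost_cong)

lemma measurable_opt_cost [measurable]: "opt_cost n \<in> borel_measurable seqM"
  by (rule measurable_seqM_finitely_determined[of "{0..<int n}"]) (auto intro: opt_cost_cong)

lemma integrable_opt_cost:
  assumes "prob_space M" "f \<in> measurable M seqM"
  shows "integrable M (\<lambda>z. opt_cost n (f z))"
proof -
  interpret prob_space M
    by (rule assms(1))
  show ?thesis
    using measurable_compose[OF assms(2) measurable_opt_cost] abs_opt_cost_le
    by (intro integrable_const_bound[where B="n * Fbound F"]) auto
qed

lemma integral_opt_cost_le_joining:
  assumes m: "m \<in> inv_probs2 X Y" and marginal: "distr m seqM snd = \<nu>"
  shows "integral\<^sup>L \<nu> (opt_cost n) \<le> n * integral\<^sup>L m (potf F)"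
proof -
  interpret prob_space m
    using inv_probs2D(2)[OF m] .
  have meas: "measurable m N = measurable (seqM \<Otimes>\<^sub>M seqM) N" for N :: "'b measure"
    by (rule measurable_cong_sets[OF inv_probs2D(1)[OF m] refl])
  have "integral\<^sup>L \<nu> (opt_cost n) = (\<integral>p. opt_cost n (snd p) \<partial>m)"
    unfolding marginal[symmetric] by (rule integral_distr) (simp_all add: meas)
  also have "\<dots> \<le> (\<integral>p. (\<Sum>j<n. potf F ((shift_pair ^^ j) p)) \<partial>m)"
  proof (rule integral_mono_AE)
    show "integrable m (\<lambda>p. opt_cost n (snd p))"
      using prob_space_axioms by (rule integrable_opt_cost) (simp add: meas)
    show "integrable m (\<lambda>p. \<Sum>j<n. potf F ((shift_pair ^^ j) p))"
      using integrable_potf_funpow_shift_pair[OF m] by auto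
    show "AE p in m. opt_cost n (snd p) \<le> (\<Sum>j<n. potf F ((shift_pair ^^ j) p))"
      using AE_mem_of_emeasure_eq_1[OF inv_probs2D(3)[OF m]]
      by eventually_elim (auto simp: potf_funpow_shift_pair cost_eq_sum_nat[symmetric] intro: opt_cost_le)
  qed
  also have "\<dots> = n * integral\<^sup>L m (potf F)"
    using integrable_potf_funpow_shift_pair[OF m]
    by (simp add: Bochner_Integration.integral_sum integral_potf_funpow_shift_pair[OF m])
  finally show ?thesis .
qed

lemma Hab_eq_Min_cost:
  assumes "1 \<le> n"
  shows "Hab F X 0 (int n - 1) v1 v2 w = Min ((\<lambda>x. cost n x w) ` {x \<in> X. x 0 = v1 \<and> x (int n - 1) = v2})"
proof -
  have "{0..int n - 1} = {0..<int n}"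
    by auto
  then have "birk F 0 (int n - 1) x w = cost n x w" for x
    by (simp add: birk_def potf_def cost_def)
  then show ?thesis
    unfolding Hab_def by (simp add: setcompr_eq_image)
qed

lemma Hab_le_opt_cost:
  assumes P: "(v1, v2) \<in> Pab X 0 (int n - 1)" and n: "2 * D + 1 \<le> n"
  shows "Hab F X 0 (int n - 1) v1 v2 y \<le> opt_cost n y + 4 * D * Fbound F"
proof -
  obtain xt where xt: "xt \<in> X" "xt 0 = v1" "xt (int n - 1) = v2"
    using P unfolding Pab_def by blast
  obtain x1 where x1: "x1 \<in> X" "\<And>j. j \<le> 0 \<Longrightarrow> x1 j = xt j" "\<And>j. int D \<le> j \<Longrightarrow> x1 j = opt_path n y j"
    using splices_withinE[OF splice_X xt(1) opt_path_in, where a = 0 and b = "int D"] by auto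
  obtain x2 where x2: "x2 \<in> X" "\<And>j. j \<le> int n - 1 - int D \<Longrightarrow> x2 j = x1 j"
      "\<And>j. int n - 1 \<le> j \<Longrightarrow> x2 j = xt j"
    using splices_withinE[OF splice_X x1(1) xt(1), where a = "int n - 1 - int D" and b = "int n - 1"] by auto
  have "x2 \<in> {x \<in> X. x 0 = v1 \<and> x (int n - 1) = v2}"
    using x1 x2 xt n by auto
  then have "Hab F X 0 (int n - 1) v1 v2 y \<le> cost n x2 y"
    using n by (simp add: Hab_eq_Min_cost finite_cost_image)
  also have "\<dots> \<le> cost n (opt_path n y) y + 2 * Fbound F * card ({0..<int D} \<union> {int n - int D..<int n})"
    unfolding cost_def by (rule sum_le_if_eq_outside) (auto simp: x1 x2 abs_le_Fbound)
  also have "card ({0..<int D} \<union> {int n - int D..<int n}) \<le> 2 * D"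
    using card_Un_le[of "{0..<int D}" "{int n - int D..<int n}"] by simp
  then have "2 * Fbound F * card ({0..<int D} \<union> {int n - int D..<int n}) \<le> 2 * Fbound F * (2 * D)"
    using Fbound_nonneg by (intro mult_left_mono) simp_all
  finally show ?thesis
    by (simp add: opt_cost_def algebra_simps)
qed

lemma exists_splice_window:
  assumes y: "y \<in> Y" and ys: "ys \<in> Y" and n: "D \<le> n"
  obtains y' where "y' \<in> Y" "\<And>j. j \<notin> {0..int n - 1} \<Longrightarrow> y' j = y j"
    "\<And>j. int D \<le> j \<Longrightarrow> j < int n - int D \<Longrightarrow> y' j = ys (j - int D)"
proof -
  have ys_shifted: "shiftZ (- int D) ys \<in> Y"
    using SFT_Y ys by (rule is_1step_SFT_shiftZ)
  obtain z where z: "z \<in> Y" "\<And>j. j \<le> -1 \<Longrightarrow> z j = y j" "\<And>j. int D - 1 \<le> j \<Longrightarrow> z j = ys (j - int D)"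
    using splices_withinE[OF splice_Y y ys_shifted, where a = "-1" and b = "int D - 1"] by auto
  obtain y' where y': "y' \<in> Y" "\<And>j. j \<le> int n - int D \<Longrightarrow> y' j = z j" "\<And>j. int n \<le> j \<Longrightarrow> y' j = y j"
    using splices_withinE[OF splice_Y z(1) y, where a = "int n - int D" and b = "int n"] by auto
  show thesis
  proof (rule that)
    show "y' j = y j" if "j \<notin> {0..int n - 1}" for j
      using that y' z n by (cases "j < 0") auto
  qed (use y' z in auto)
qed

lemma opt_cost_le_Hab:
  assumes P: "(v1, v2) \<in> Pab X 0 (int n - 1)" and n: "2 * D + 1 \<le> n"
    and window: "\<And>j. int D \<le> j \<Longrightarrow> j < int n - int D \<Longrightarrow> y' j = ys (j - int D)"
  shows "opt_cost (n - 2 * D) ys - 2 * D * Fbound F \<le> Hab F X 0 (int n - 1) v1 v2 y'"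
proof -
  let ?E = "{x \<in> X. x 0 = v1 \<and> x (int n - 1) = v2}"
  have "Min ((\<lambda>x. cost n x y') ` ?E) \<in> (\<lambda>x. cost n x y') ` ?E"
    using P unfolding Pab_def by (intro Min_in finite_cost_image) auto
  then obtain x where x: "x \<in> X" "Min ((\<lambda>x. cost n x y') ` ?E) = cost n x y'"
    by auto
  have "opt_cost (n - 2 * D) ys \<le> cost (n - 2 * D) (shiftZ (int D) x) ys"
    using SFT_X x(1) by (intro opt_cost_le is_1step_SFT_shiftZ)
  also have "\<dots> = (\<Sum>i\<in>{0..<int n - int D - int D}. F (x (i + int D)) (ys i))"
    using n by (simp add: cost_def of_nat_diff)
  also have "\<dots> = (\<Sum>j\<in>{int D..<int n - int D}. F (x j) (ys (j - int D)))"
  proof -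
    have "{int D..<int n - int D} = (\<lambda>i. i + int D) ` {0..<int n - int D - int D}"
      by (rule image_add_int_atLeastLessThan[symmetric])
    then show ?thesis
      by (intro sum.reindex_cong[where l = "\<lambda>i. i + int D", symmetric]) (simp_all add: inj_on_def)
  qed
  also have "\<dots> = (\<Sum>j\<in>{int D..<int n - int D}. F (x j) (y' j))"
    using window by (intro sum.cong) auto
  also have "\<dots> \<le> cost n x y' + Fbound F * card ({0..<int n} - {int D..<int n - int D})"
    using sum_subset_minus_le[of "{0..<int n}" "{int D..<int n - int D}" "\<lambda>j. F (x j) (y' j)" "Fbound F"]
    unfolding cost_def by (simp add: abs_le_Fbound)
  also have "card ({0..<int n} - {int D..<int n - int D}) = 2 * D"
  proof -
    have "card ({0..<int n} - {int D..<int n - int D}) = card {0..<int n} - card {int D..<int n - int D}"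
      by (rule card_Diff_subset) auto
    then show ?thesis
      using n by simp
  qed
  finally have "opt_cost (n - 2 * D) ys - 2 * D * Fbound F \<le> cost n x y'"
    by (simp add: algebra_simps)
  moreover have "Hab F X 0 (int n - 1) v1 v2 y' = cost n x y'"
    using x(2) n by (simp add: Hab_eq_Min_cost)
  ultimately show ?thesis
    by simp
qed

lemma opt_cost_ge_on_YfC:
  assumes y: "y \<in> YfC F X Y C" and ys: "ys \<in> Y" and n: "2 * D + 1 \<le> n"
  shows "opt_cost (n - 2 * D) ys - C - 6 * D * Fbound F \<le> opt_cost n y"
proof -
  let ?agree = "\<lambda>y'. y' \<in> Y \<and> (\<forall>j. j \<notin> {0..int n - 1} \<longrightarrow> y' j = y j)"
  have "0 \<le> int n - 1"
    using n by simp
  then obtain v1 v2 where P: "(v1, v2) \<in> Pab X 0 (int n - 1)"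
    and H: "Max {Hab F X 0 (int n - 1) v1 v2 y' | y'. ?agree y'} - C \<le> Hab F X 0 (int n - 1) v1 v2 y"
    using y unfolding YfC_def by blast
  have "y \<in> Y" "D \<le> n"
    using y n unfolding YfC_def by auto
  then obtain y' where y': "y' \<in> Y" "\<And>j. j \<notin> {0..int n - 1} \<Longrightarrow> y' j = y j"
    "\<And>j. int D \<le> j \<Longrightarrow> j < int n - int D \<Longrightarrow> y' j = ys (j - int D)"
    using ys exists_splice_window by metis
  have "Hab F X 0 (int n - 1) v1 v2 y' \<le> Max {Hab F X 0 (int n - 1) v1 v2 y' | y'. ?agree y'}"
    using y'(1,2) by (intro Max_ge) (auto simp: setcompr_eq_image finite_Hab_image)
  moreover have "opt_cost (n - 2 * D) ys - 2 * D * Fbound F \<le> Hab F X 0 (int n - 1) v1 v2 y'"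
    using P n y'(3) by (rule opt_cost_le_Hab)
  ultimately show ?thesis
    using H Hab_le_opt_cost[OF P n, of y] by (simp add: algebra_simps)
qed

subsection \<open>Concatenating optimal blocks\<close>

definition glue :: "nat \<Rightarrow> (int \<Rightarrow> 'a) \<Rightarrow> (int \<Rightarrow> 'a) \<Rightarrow> (int \<Rightarrow> 'a)" where
  "glue N z z' = (SOME x. x \<in> X \<and> (\<forall>j \<le> int N - 1 - int D. x j = z j) \<and> (\<forall>j \<ge> int N. x j = z' (j - int N)))"

lemma glue_spec:
  assumes "z \<in> X" "z' \<in> X"
  shows "glue N z z' \<in> X \<and> (\<forall>j \<le> int N - 1 - int D. glue N z z' j = z j)
    \<and> (\<forall>j \<ge> int N. glue N z z' j = z' (j - int N))"
proof -
  have z'_shifted: "shiftZ (- int N) z' \<in> X"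
    using SFT_X assms(2) by (rule is_1step_SFT_shiftZ)
  obtain x where "x \<in> X" "\<And>j. j \<le> int N - 1 - int D \<Longrightarrow> x j = z j"
      "\<And>j. int N \<le> j \<Longrightarrow> x j = z' (j - int N)"
    using splices_withinE[OF splice_X assms(1) z'_shifted, where a = "int N - 1 - int D" and b = "int N"]
    by auto
  then have "x \<in> X \<and> (\<forall>j \<le> int N - 1 - int D. x j = z j) \<and> (\<forall>j \<ge> int N. x j = z' (j - int N))"
    by simp
  then show ?thesis
    unfolding glue_def by (rule someI[where P = "\<lambda>x. x \<in> X \<and> (\<forall>j \<le> int N - 1 - int D. x j = z j)
      \<and> (\<forall>j \<ge> int N. x j = z' (j - int N))"])
qed

text \<open>The optimal paths for the consecutive \<open>N\<close>-blocks of \<open>y\<close>, each with its last \<open>D\<close> symbols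
  replaced by a transition into the next one.\<close>

definition block_path :: "nat \<Rightarrow> (int \<Rightarrow> 'a) \<Rightarrow> int \<Rightarrow> (int \<Rightarrow> 'a)" where
  "block_path N y k = glue N (opt_path N (shiftZ (k * int N) y)) (opt_path N (shiftZ ((k + 1) * int N) y))"

definition concat_path :: "nat \<Rightarrow> (int \<Rightarrow> 'a) \<Rightarrow> (int \<Rightarrow> 'a)" where
  "concat_path N y t = block_path N y (t div int N) (t mod int N)"

lemma block_path_in: "block_path N y k \<in> X"
  unfolding block_path_def using glue_spec[OF opt_path_in opt_path_in] by blast

lemma block_path_head: "j \<le> int N - 1 - int D \<Longrightarrow> block_path N y k j = opt_path N (shiftZ (k * int N) y) j"
  unfolding block_path_def using glue_spec[OF opt_path_in opt_path_in] by blast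

lemma block_path_overlap:
  assumes "D + 1 \<le> N"
  shows "block_path N y k (int N) = block_path N y (k + 1) 0"
  using glue_spec[OF opt_path_in opt_path_in] assms by (simp add: block_path_def block_path_head)

lemma block_path_cong:
  assumes "\<And>j. k * int N \<le> j \<Longrightarrow> j < k * int N + 2 * int N \<Longrightarrow> y j = y' j"
  shows "block_path N y k = block_path N y' k"
proof -
  have "opt_path N (shiftZ (k * int N) y) = opt_path N (shiftZ (k * int N) y')"
    by (rule opt_path_cong) (use assms in auto)
  moreover have "opt_path N (shiftZ ((k + 1) * int N) y) = opt_path N (shiftZ ((k + 1) * int N) y')"
    by (rule opt_path_cong) (use assms in \<open>auto simp: algebra_simps\<close>)
  ultimately show ?thesis
    unfolding block_path_def by simp
qed

lemma concat_path_block: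
  assumes "0 \<le> i" "i < int N"
  shows "concat_path N y (k * int N + i) = block_path N y k i"
  using assms unfolding concat_path_def by simp

lemma concat_path_in:
  assumes N: "D + 1 \<le> N"
  shows "concat_path N y \<in> X"
proof (rule is_1step_SFT_memI[OF SFT_X])
  fix t
  define k i where "k = t div int N" and "i = t mod int N"
  have t: "t = k * int N + i" "0 \<le> i" "i < int N"
    using N unfolding k_def i_def by simp_all
  have "concat_path N y (t + 1) = block_path N y k (i + 1)"
  proof (cases "i + 1 < int N")
    case True
    then show ?thesis
      using t concat_path_block[of "i + 1" N y k] by (simp add: add.assoc)
  next
    case False
    then have "t + 1 = (k + 1) * int N + 0" "i + 1 = int N"
      using t by (simp_all add: algebra_simps)
    then show ?thesis
      using N concat_path_block[of 0 N y "k + 1"] block_path_overlap[OF N, of y k] by simp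
  qed
  then show "\<exists>x\<in>X. x t = concat_path N y t \<and> x (t + 1) = concat_path N y (t + 1)"
    using t concat_path_block[of i N y k] block_path_in[of N y k]
    by (intro bexI[of _ "shiftZ (- (k * int N)) (block_path N y k)"] is_1step_SFT_shiftZ[OF SFT_X])
      (simp_all add: algebra_simps)
qed

lemma concat_path_shiftZ:
  assumes "1 \<le> N"
  shows "concat_path N (shiftZ (int N) y) = shiftZ (int N) (concat_path N y)"
proof
  fix t
  define k i where "k = t div int N" and "i = t mod int N"
  have t: "t = k * int N + i" "0 \<le> i" "i < int N"
    using assms unfolding k_def i_def by simp_all
  have "t + int N = (k + 1) * int N + i"
    using t by (simp add: algebra_simps)
  then have "shiftZ (int N) (concat_path N y) t = concat_path N y ((k + 1) * int N + i)"
    by simp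
  also have "\<dots> = block_path N y (k + 1) i"
    using t by (intro concat_path_block) simp_all
  also have "block_path N y (k + 1) = block_path N (shiftZ (int N) y) k"
    unfolding block_path_def by (simp add: shiftZ_def algebra_simps)
  also have "\<dots> i = concat_path N (shiftZ (int N) y) t"
    using t concat_path_block[of i N "shiftZ (int N) y" k] by simp
  finally show "concat_path N (shiftZ (int N) y) t = shiftZ (int N) (concat_path N y) t"
    by simp
qed

lemma measurable_concat_path: "concat_path N \<in> measurable seqM seqM"
proof (rule measurable_into_seqM)
  fix t
  let ?k = "t div int N"
  show "(\<lambda>y. concat_path N y t) \<in> measurable seqM (count_space UNIV)"
    unfolding concat_path_def
  proof (rule measurable_seqM_finitely_determined[of "{?k * int N..<?k * int N + 2 * int N}"])
    fix y y' :: "int \<Rightarrow> 'a"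
    assume "\<And>j. j \<in> {?k * int N..<?k * int N + 2 * int N} \<Longrightarrow> y j = y' j"
    then have "block_path N y ?k = block_path N y' ?k"
      by (intro block_path_cong) simp
    then show "block_path N y ?k (t mod int N) = block_path N y' ?k (t mod int N)"
      by simp
  qed simp_all
qed

lemma cost_concat_path_le:
  assumes N: "D + 1 \<le> N"
  shows "cost N (concat_path N y) y \<le> opt_cost N y + 2 * D * Fbound F"
proof -
  have "concat_path N y j = opt_path N y j" if "j \<in> {0..<int N} - {int N - int D..<int N}" for j
  proof -
    have "0 \<le> j" "j < int N" "j \<le> int N - 1 - int D"
      using that by auto
    then show ?thesis
      using concat_path_block[of j N y 0] block_path_head[of j N y 0] by simp
  qed
  then have "cost N (concat_path N y) y \<le> cost N (opt_path N y) y + 2 * Fbound F * card {int N - int D..<int N}"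
    unfolding cost_def by (intro sum_le_if_eq_outside) (auto simp: abs_le_Fbound)
  then show ?thesis
    by (simp add: opt_cost_def mult_ac)
qed

lemma exists_joining_le_opt_cost:
  assumes \<nu>: "\<nu> \<in> inv_probs Y" and N: "D + 1 \<le> N"
  shows "\<exists>m\<in>inv_probs2 X Y. distr m seqM snd = \<nu> \<and>
    N * integral\<^sup>L m (potf F) \<le> integral\<^sup>L \<nu> (opt_cost N) + 2 * D * Fbound F"
proof -
  let ?m = "phase_average N (concat_path N) \<nu>"
  have N_pos: "0 < N"
    using N by simp
  note phase = N_pos measurable_concat_path inv_probsD(1,2,4)[OF \<nu>]
  have equivariant: "concat_path N ((shift ^^ N) y) = (shift ^^ N) (concat_path N y)" for y
    using N concat_path_shiftZ[of N y] by (simp add: funpow_shift_eq_shiftZ)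
  have "?m \<in> inv_probs2 X Y"
    using sets_phase_average[OF phase] prob_space_phase_average[OF phase]
      emeasure_phase_average_Times[OF phase SFT_X SFT_Y inv_probsD(3)[OF \<nu>] concat_path_in[OF N]]
      phase_average_shift_pair_invariant[OF phase equivariant]
    unfolding inv_probs2_def shift_pair_def by simp
  moreover have "N * integral\<^sup>L ?m (potf F) \<le> integral\<^sup>L \<nu> (opt_cost N) + 2 * D * Fbound F"
  proof -
    interpret prob_space \<nu>
      using inv_probsD(2)[OF \<nu>] .
    have "N * integral\<^sup>L ?m (potf F) = (\<integral>y. cost N (concat_path N y) y \<partial>\<nu>)"
      using N_pos by (simp add: integral_potf_phase_average[OF phase] cost_eq_sum_nat)
    also have "\<dots> \<le> (\<integral>y. opt_cost N y + 2 * D * Fbound F \<partial>\<nu>)"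
      using integrable_phase_sum[OF phase] integrable_opt_cost[OF prob_space_axioms, of "\<lambda>y. y"]
        cost_concat_path_le[OF N]
      by (intro integral_mono) (simp_all add: cost_eq_sum_nat measurable_cong_sets[OF inv_probsD(1)[OF \<nu>] refl])
    also have "\<dots> = integral\<^sup>L \<nu> (opt_cost N) + 2 * D * Fbound F"
      using integrable_opt_cost[OF prob_space_axioms, of "\<lambda>y. y"]
      by (simp add: prob_space measurable_cong_sets[OF inv_probsD(1)[OF \<nu>] refl])
    finally show ?thesis .
  qed
  ultimately show ?thesis
    using snd_phase_average[OF phase] by blast
qed

lemma psi_le_opt_cost:
  assumes \<nu>: "\<nu> \<in> inv_probs Y" and L: "D + 1 \<le> L"
  obtains ys where "ys \<in> Y" "L * psi F X Y \<nu> \<le> opt_cost L ys + 2 * D * Fbound F"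
proof -
  interpret prob_space \<nu>
    using inv_probsD(2)[OF \<nu>] .
  obtain m where m: "m \<in> inv_probs2 X Y" "distr m seqM snd = \<nu>"
    "L * integral\<^sup>L m (potf F) \<le> integral\<^sup>L \<nu> (opt_cost L) + 2 * D * Fbound F"
    using exists_joining_le_opt_cost[OF \<nu> L] by blast
  obtain ys where ys: "ys \<in> Y" "integral\<^sup>L \<nu> (opt_cost L) \<le> opt_cost L ys"
    using integral_le_value[OF integrable_opt_cost[OF prob_space_axioms, of "\<lambda>y. y"]
        finite_opt_cost_image Y_nonempty AE_mem_of_emeasure_eq_1[OF inv_probsD(3)[OF \<nu>]]]
    by (auto simp: measurable_cong_sets[OF inv_probsD(1)[OF \<nu>] refl])
  have "L * psi F X Y \<nu> \<le> L * integral\<^sup>L m (potf F)"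
    using psi_le_integral[OF m(1,2)] by (simp add: mult_left_mono)
  then show thesis
    using ys m(3) by (intro that[OF ys(1)]) linarith
qed

lemma opt_cost_le_psi_of_supported_on_YfC:
  assumes \<nu>0: "\<nu>0 \<in> inv_probs Y" and supp: "emeasure \<nu>0 (YfC F X Y C) = 1"
    and ys: "ys \<in> Y" and n: "2 * D + 1 \<le> n"
  shows "opt_cost (n - 2 * D) ys - C - 6 * D * Fbound F \<le> n * psi F X Y \<nu>0"
proof -
  interpret prob_space \<nu>0
    using inv_probsD(2)[OF \<nu>0] .
  let ?c = "opt_cost (n - 2 * D) ys - C - 6 * D * Fbound F"
  have "?c / n \<le> psi F X Y \<nu>0"
  proof (rule psi_ge)
    show "\<exists>m\<in>inv_probs2 X Y. distr m seqM snd = \<nu>0"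
      using exists_joining_le_opt_cost[OF \<nu>0 order_refl] by blast
  next
    fix m0 assume m0: "m0 \<in> inv_probs2 X Y" "distr m0 seqM snd = \<nu>0"
    have "AE y in \<nu>0. ?c \<le> opt_cost n y"
      using AE_mem_of_emeasure_eq_1[OF supp] by eventually_elim (rule opt_cost_ge_on_YfC[OF _ ys n])
    then have "integral\<^sup>L \<nu>0 (\<lambda>_. ?c) \<le> integral\<^sup>L \<nu>0 (opt_cost n)"
      using integrable_opt_cost[OF prob_space_axioms, of "\<lambda>y. y"]
      by (intro integral_mono_AE) (simp_all add: measurable_cong_sets[OF inv_probsD(1)[OF \<nu>0] refl])
    also have "\<dots> \<le> n * integral\<^sup>L m0 (potf F)"
      using m0 by (rule integral_opt_cost_le_joining)
    finally show "?c / n \<le> integral\<^sup>L m0 (potf F)"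
      using n by (simp add: prob_space divide_le_eq mult.commute)
  qed
  then show ?thesis
    using n by (simp add: divide_le_eq mult.commute)
qed

lemma psi_le_psi_of_supported_on_YfC:
  assumes \<nu>0: "\<nu>0 \<in> inv_probs Y" and supp: "emeasure \<nu>0 (YfC F X Y C) = 1"
    and \<nu>: "\<nu> \<in> inv_probs Y"
  shows "psi F X Y \<nu> \<le> psi F X Y \<nu>0"
proof (rule le_of_eventually_linear_bound[where k = "3 * D + 1" and a = "2 * real D"
      and K = "C + 8 * D * Fbound F"])
  fix n assume n: "3 * D + 1 \<le> n"
  then have L: "D + 1 \<le> n - 2 * D" "real (n - 2 * D) = real n - 2 * real D"
    by auto
  obtain ys where "ys \<in> Y" "(n - 2 * D) * psi F X Y \<nu> \<le> opt_cost (n - 2 * D) ys + 2 * D * Fbound F"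
    using psi_le_opt_cost[OF \<nu> L(1)] .
  moreover have "opt_cost (n - 2 * D) ys - C - 6 * D * Fbound F \<le> n * psi F X Y \<nu>0"
    if "ys \<in> Y" for ys
    using \<nu>0 supp that n by (intro opt_cost_le_psi_of_supported_on_YfC) simp_all
  ultimately show "(real n - 2 * real D) * psi F X Y \<nu> \<le> n * psi F X Y \<nu>0 + (C + 8 * D * Fbound F)"
    unfolding L(2)[symmetric] by fastforce
qed
end

theorem proposition3p10:
  fixes X Y :: "(int \<Rightarrow> 'a::finite) set"
    and F :: "'a \<Rightarrow> 'a \<Rightarrow> real"
    and C :: real
    and \<nu>0 :: "(int \<Rightarrow> 'a) measure"
  assumes "is_1step_SFT X" and "transitive_shift X"
    and "is_1step_SFT Y" and "transitive_shift Y"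
    and "C \<ge> 0"
    and "\<nu>0 \<in> inv_probs Y"
    and "emeasure \<nu>0 (YfC F X Y C) = 1"
  shows "psi F X Y \<nu>0 = alpha F X Y"
proof -
  obtain DX DY where "splices_within DX X" "splices_within DY Y"
    using assms(2,4) unfolding transitive_shift_iff_splices_within by blast
  then interpret SFT_pair X Y F "max DX DY"
    using assms(1,3) by unfold_locales (auto elim: splices_within_mono)
  have "psi F X Y \<nu> \<le> psi F X Y \<nu>0" if "\<nu> \<in> inv_probs Y" for \<nu>
    using assms(6,7) that by (rule psi_le_psi_of_supported_on_YfC)
  then show ?thesis
    unfolding alpha_def using assms(6) by (intro cSup_eq_maximum[symmetric]) auto
qed

end
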